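(* Let $\alpha\in(0,1]$ and let $\lambda, c$ be real constants with $c>0$. Let $(L_B)^{\alpha}$ denote the fractional power of the Bessel operator $L_B=\frac{d^2}{dw^2}+\frac{1}{w}\frac{d}{dw}$, defined for functions $f$ of $w>0$ by $$(L_B)^{\alpha}f(w)=4^{\alpha}w^{-2\alpha}\,I_2^{0,-\alpha}\,I_2^{0,-\alpha}f(w).$$ Then the function $$u_{\alpha}(w)=w^{2\alpha-2}\sum_{k=0}^{\infty}(-1)^k\left(\frac{\lambda}{2^{\alpha}c^{\alpha}}\right)^{2k}\frac{w^{2\alpha k}}{[\Gamma(\alpha k+\alpha)]^2},\qquad w>0,$$ satisfies the fractional Bessel equation $$(L_B)^{\alpha}u_{\alpha}(w)=-\frac{\lambda^2}{c^{2\alpha}}u_{\alpha}(w).$$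
   Context: Erdélyi–Kober operators (McBride's notation): for $m>0$, $\eta\in\mathbb{R}$ and $\alpha>0$, $$I_m^{\eta,\alpha}f(x)=\frac{x^{-m\eta-m\alpha}}{\Gamma(\alpha)}\int_0^x(x^m-u^m)^{\alpha-1}u^{m\eta}f(u)\,d(u^m),$$ and for $\alpha\le 0$ they are defined recursively by $$I_m^{\eta,\alpha}f=(\eta+\alpha+1)I_m^{\eta,\alpha+1}f+\frac{1}{m}I_m^{\eta,\alpha+1}\left(x\frac{d}{dx}f\right).$$ This is McBride's definition of fractional powers of the hyper-Bessel operator $x^{a_1}Dx^{a_2}\cdots x^{a_n}Dx^{a_{n+1}}$, specialized to $n=2$, $a_1=-1$, $a_2=1$, $a_3=0$ (so $m=2$ and both parameters $b_1=b_2=0$). *)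

theory Defs
  imports "HOL-Analysis.Analysis"
begin

text \<open>Erdelyi--Kober operator for alpha > 0 (McBride). The measure d(u^m) is written
  as m * u^(m-1) du.\<close>
definition EK_pos :: "real \<Rightarrow> real \<Rightarrow> real \<Rightarrow> (real \<Rightarrow> real) \<Rightarrow> real \<Rightarrow> real" where
  "EK_pos m \<eta> \<alpha> f x =
     x powr (- m * \<eta> - m * \<alpha>) / Gamma \<alpha> *
     integral {0..x} (\<lambda>u. (x powr m - u powr m) powr (\<alpha> - 1) * u powr (m * \<eta>) * f u
                           * (m * u powr (m - 1)))"

fun EK_iter :: "nat \<Rightarrow> real \<Rightarrow> real \<Rightarrow> real \<Rightarrow> (real \<Rightarrow> real) \<Rightarrow> real \<Rightarrow> real" where
  "EK_iter 0 m \<eta> \<alpha> f = EK_pos m \<eta> \<alpha> f"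
| "EK_iter (Suc n) m \<eta> \<alpha> f =
     (\<lambda>x. (\<eta> + \<alpha> + 1) * EK_iter n m \<eta> (\<alpha> + 1) f x
          + (1 / m) * EK_iter n m \<eta> (\<alpha> + 1) (\<lambda>u. u * deriv f u) x)"

definition EK :: "real \<Rightarrow> real \<Rightarrow> real \<Rightarrow> (real \<Rightarrow> real) \<Rightarrow> real \<Rightarrow> real" where
  "EK m \<eta> \<alpha> f = EK_iter (if \<alpha> > 0 then 0 else nat \<lfloor>- \<alpha>\<rfloor> + 1) m \<eta> \<alpha> f"

definition LB_frac :: "real \<Rightarrow> (real \<Rightarrow> real) \<Rightarrow> real \<Rightarrow> real" where
  "LB_frac \<alpha> f w = 4 powr \<alpha> * w powr (- 2 * \<alpha>) * EK 2 0 (- \<alpha>) (EK 2 0 (- \<alpha>) f) w"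

end

theory Submission
  imports Defs
begin

text \<open>For \<open>m = 2\<close> and \<open>\<eta> = 0\<close> the Erdelyi--Kober operator of any order \<open>\<beta>\<close> acts diagonally
  on powers: it multiplies \<open>x powr p\<close> by \<open>\<Gamma>(1 + p/2) / \<Gamma>(1 + \<beta> + p/2)\<close>. For \<open>\<beta> > 0\<close> this is a
  Beta integral after the substitution \<open>s = (u/x)\<^sup>2\<close>; for \<open>\<beta> \<le> 0\<close> it follows from McBride's
  recursion, because \<open>x d/dx\<close> multiplies \<open>x powr p\<close> by \<open>p\<close>. On series in the powers
  \<open>w powr (2\<alpha> - 2 + 2\<alpha>k)\<close> with entire coefficients both steps can be taken termwise (dominated
  convergence, termwise differentiation), so \<open>(L\<^sub>B)\<^sup>\<alpha>\<close> multiplies the \<open>k\<close>-th term by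
  \<open>4\<^sup>\<alpha> w powr (-2\<alpha>) (\<Gamma>(\<alpha>k + \<alpha>) / \<Gamma>(\<alpha>k))\<^sup>2\<close>. For \<open>u\<^sub>\<alpha>\<close> the factor \<open>1/\<Gamma>(\<alpha>k)\<^sup>2\<close> kills
  the term \<open>k = 0\<close> and maps the term \<open>k + 1\<close> to \<open>-\<lambda>\<^sup>2/c\<^sup>2\<^sup>\<alpha>\<close> times the term \<open>k\<close> of \<open>u\<^sub>\<alpha>\<close>.\<close>

section \<open>The Erdelyi--Kober kernel and the Beta integral\<close>

lemma EK_kernel_rescale:
  fixes x u \<beta> p :: real
  assumes u: "0 < u" "u < x"
  shows "(x powr 2 - u powr 2) powr (\<beta> - 1) * u powr p * (2 * u) =
    x powr (2 * \<beta> + p) * (((u / x)\<^sup>2) powr (p / 2) * (1 - (u / x)\<^sup>2) powr (\<beta> - 1) * (2 * u / x\<^sup>2))"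
proof -
  define r where "r = u / x"
  have x: "x > 0" using u by simp
  have r: "0 < r" using u by (simp add: r_def)
  have "x powr 2 - u powr 2 = x powr 2 * (1 - r\<^sup>2)"
    using x u by (simp add: r_def field_simps powr_numeral)
  moreover have "(x powr 2 * (1 - r\<^sup>2)) powr (\<beta> - 1) = (x powr 2) powr (\<beta> - 1) * (1 - r\<^sup>2) powr (\<beta> - 1)"
    by (rule powr_mult)
  ultimately have "(x powr 2 - u powr 2) powr (\<beta> - 1) = x powr (2 * \<beta> - 2) * (1 - r\<^sup>2) powr (\<beta> - 1)"
    unfolding powr_powr by (simp add: algebra_simps)
  moreover have "(r\<^sup>2) powr (p / 2) = u powr p / x powr p"
    using r x by (simp add: r_def powr_powr powr_divide flip: powr_numeral)
  moreover have "x powr (2 * \<beta> + p) = x powr (2 * \<beta> - 2) * x powr p * x\<^sup>2"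
    using x by (simp add: powr_add [symmetric] flip: powr_numeral)
  ultimately show ?thesis
    using x by (simp add: r_def field_simps)
qed

lemma nn_integral_Beta_rescaled:
  fixes x \<beta> p :: real
  assumes x: "x > 0" and \<beta>: "\<beta> > 0" and p: "p > -2"
  shows "(\<integral>\<^sup>+u. ennreal (((u / x)\<^sup>2) powr (p / 2) * (1 - (u / x)\<^sup>2) powr (\<beta> - 1) * (2 * u / x\<^sup>2)
      * indicator {0..x} u) \<partial>lborel) = ennreal (Beta (p / 2 + 1) \<beta>)"
proof -
  define F where "F s = s powr (p / 2) * (1 - s) powr (\<beta> - 1)" for s :: real
  define g where "g u = (u / x)\<^sup>2" for u :: real
  define g' where "g' u = 2 * u / x\<^sup>2" for u :: real
  have "(\<integral>\<^sup>+u. ennreal (F (g u) * g' u * indicator {0..x} u) \<partial>lborel) =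
        (\<integral>\<^sup>+s. ennreal (F s * indicator {g 0..g x} s) \<partial>lborel)"
    by (rule nn_integral_substitution [symmetric])
       (use x in \<open>auto simp: F_def g_def g'_def set_borel_measurable_def power2_eq_square field_simps
          intro!: derivative_eq_intros continuous_intros\<close>)
  also have "\<dots> = (\<integral>\<^sup>+s\<in>{0..1}. ennreal (F s) \<partial>lborel)"
    using x by (intro nn_integral_cong) (auto simp: g_def indicator_def)
  also have "\<dots> = ennreal (Beta (p / 2 + 1) \<beta>)"
    using has_integral_Beta_real[of "p / 2 + 1" \<beta>] p \<beta>
    by (intro nn_integral_has_integral_lebesgue') (auto simp: F_def)
  finally show ?thesis
    by (simp add: F_def g_def g'_def)
qed

lemma EK_kernel_has_integral:
  fixes x \<beta> p :: real
  assumes x: "x > 0" and \<beta>: "\<beta> > 0" and p: "p > -2"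
  shows "((\<lambda>u. (x powr 2 - u powr 2) powr (\<beta> - 1) * u powr p * (2 * u))
           has_integral x powr (2 * \<beta> + p) * Beta (p / 2 + 1) \<beta>) {0..x}"
proof -
  define G where "G u = (x powr 2 - u powr 2) powr (\<beta> - 1) * u powr p * (2 * u)" for u :: real
  define H where "H u = ((u / x)\<^sup>2) powr (p / 2) * (1 - (u / x)\<^sup>2) powr (\<beta> - 1) * (2 * u / x\<^sup>2)
      * indicator {0..x} u" for u :: real
  define B where "B = Beta (p / 2 + 1) \<beta>"
  have "(\<integral>\<^sup>+u. ennreal (G u * indicator {0..x} u) \<partial>lborel) =
        (\<integral>\<^sup>+u. ennreal (x powr (2 * \<beta> + p)) * ennreal (H u) \<partial>lborel)"
  proof (rule nn_integral_cong_AE)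
    have "AE u in lborel. u \<notin> {0, x}"
      by (rule AE_I'[of "{0, x}"]) (auto intro: countable_imp_null_set_lborel)
    then show "AE u in lborel. ennreal (G u * indicator {0..x} u) = ennreal (x powr (2 * \<beta> + p)) * ennreal (H u)"
    proof (rule AE_mp, intro AE_I2 impI)
      fix u :: real assume "u \<notin> {0, x}"
      then show "ennreal (G u * indicator {0..x} u) = ennreal (x powr (2 * \<beta> + p)) * ennreal (H u)"
        using EK_kernel_rescale[of u x \<beta> p]
        by (cases "u \<in> {0..x}") (auto simp: G_def H_def indicator_def simp flip: ennreal_mult')
    qed
  qed
  also have "\<dots> = ennreal (x powr (2 * \<beta> + p)) * ennreal B"
  proof -
    have "(\<lambda>u. ennreal (H u)) \<in> borel_measurable lborel"
      unfolding H_def by measurable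
    then show ?thesis
      using nn_integral_Beta_rescaled[OF x \<beta> p] by (simp add: nn_integral_cmult H_def B_def)
  qed
  also have "\<dots> = ennreal (x powr (2 * \<beta> + p) * B)"
    by (simp add: ennreal_mult')
  finally have "((\<lambda>u. G u * indicator {0..x} u) has_integral x powr (2 * \<beta> + p) * B) UNIV"
    using p \<beta>
    by (intro nn_integral_has_integral)
       (auto simp: G_def B_def Beta_def indicator_def powr_numeral intro!: power_mono)
  then have "((\<lambda>u. if u \<in> {0..x} then G u else 0) has_integral x powr (2 * \<beta> + p) * B) UNIV"
    by (rule has_integral_eq[rotated]) (simp add: indicator_def)
  then show ?thesis
    unfolding has_integral_restrict_UNIV G_def B_def .
qed

section \<open>Power series with entire coefficients\<close>

definition entire_coeffs :: "(nat \<Rightarrow> real) \<Rightarrow> bool" where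
  "entire_coeffs c \<longleftrightarrow> (\<forall>y. summable (\<lambda>k. c k * y ^ k))"

lemma entire_coeffs_sums:
  "entire_coeffs c \<Longrightarrow> (\<lambda>k. c k * y ^ k) sums (\<Sum>k. c k * y ^ k)"
  by (simp add: entire_coeffs_def summable_sums)

lemma summable_abs_entire_coeffs:
  assumes "entire_coeffs c"
  shows "summable (\<lambda>k. \<bar>c k\<bar> * \<bar>y\<bar> ^ k)"
proof -
  have "summable (\<lambda>k. c k * (\<bar>y\<bar> + 1) ^ k)"
    using assms by (simp add: entire_coeffs_def)
  from powser_insidea[OF this, of y] show ?thesis
    by (simp add: abs_mult power_abs)
qed

lemma sums_real_mult_entire_coeffs:
  assumes "entire_coeffs c"
  shows "(\<lambda>k. real k * c k * y ^ k) sums (y * (\<Sum>k. diffs c k * y ^ k))"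
proof -
  have "summable (\<lambda>k. diffs c k * y ^ k)"
    by (rule termdiff_converges_all) (use assms in \<open>auto simp: entire_coeffs_def\<close>)
  then have "(\<lambda>k. real (Suc k) * c (Suc k) * y ^ Suc k) sums (y * (\<Sum>k. diffs c k * y ^ k))"
    using sums_mult[OF summable_sums, of _ y] by (simp add: diffs_def mult_ac)
  then show ?thesis
    by (subst (asm) sums_Suc_iff) simp
qed

lemma entire_coeffs_affine_weight:
  assumes "entire_coeffs c"
  shows "entire_coeffs (\<lambda>k. c k * (a + b * real k))"
  unfolding entire_coeffs_def
proof
  fix y :: real
  have "summable (\<lambda>k. a * (c k * y ^ k) + b * (real k * c k * y ^ k))"
    using assms sums_real_mult_entire_coeffs[OF assms]
    by (intro summable_add summable_mult) (auto simp: entire_coeffs_def sums_iff)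
  then show "summable (\<lambda>k. c k * (a + b * real k) * y ^ k)"
    by (simp add: algebra_simps)
qed

lemma powr_series_sums:
  fixes q r u :: real
  assumes "entire_coeffs c" and "u > 0"
  shows "(\<lambda>k. c k * u powr (q + r * real k)) sums (u powr q * (\<Sum>k. c k * (u powr r) ^ k))"
proof -
  have eq: "c k * u powr (q + r * real k) = u powr q * (c k * (u powr r) ^ k)" for k
    using assms(2) by (simp add: powr_add powr_powr mult.commute flip: powr_realpow)
  show ?thesis
    unfolding eq by (intro sums_mult entire_coeffs_sums assms(1))
qed

lemma deriv_powr_series:
  fixes q r u :: real
  assumes c: "entire_coeffs c" and u: "u > 0"
    and f: "\<And>v. v > 0 \<Longrightarrow> (\<lambda>k. c k * v powr (q + r * real k)) sums f v"
  shows "(\<lambda>k. c k * (q + r * real k) * u powr (q + r * real k)) sums (u * deriv f u)"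
proof -
  define P where "P y = (\<Sum>k. c k * y ^ k)" for y :: real
  define P' where "P' y = (\<Sum>k. diffs c k * y ^ k)" for y :: real
  define t where "t = u powr r"
  have f_eq: "f v = v powr q * P (v powr r)" if "v \<in> {0<..}" for v
    using sums_unique2[OF f powr_series_sums[OF c]] that by (simp add: P_def)
  have "(P has_real_derivative P' y) (at y)" for y
    unfolding P_def[abs_def] P'_def
    by (rule termdiffs_strong_converges_everywhere) (use c in \<open>auto simp: entire_coeffs_def\<close>)
  then have "((\<lambda>v. v powr q * P (v powr r)) has_real_derivative
      q * u powr (q - 1) * P t + u powr q * (P' t * (r * u powr (r - 1)))) (at u)"
    using u unfolding t_def by (auto intro!: derivative_eq_intros DERIV_chain2[where f = P])
  then have "(f has_real_derivative
      q * u powr (q - 1) * P t + u powr q * (P' t * (r * u powr (r - 1)))) (at u)"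
    by (rule has_field_derivative_transform_within_open[of _ _ _ "{0<..}"]) (use u f_eq in auto)
  then have "u * deriv f u = u * (q * u powr (q - 1) * P t + u powr q * (P' t * (r * u powr (r - 1))))"
    by (simp add: DERIV_imp_deriv)
  also have "\<dots> = u powr q * (q * P t + r * (t * P' t))"
    using u by (simp add: t_def powr_diff field_simps)
  finally have "u * deriv f u = u powr q * (q * P t + r * (t * P' t))" .
  moreover have "(\<lambda>k. u powr q * (q * (c k * t ^ k) + r * (real k * c k * t ^ k)))
      sums (u powr q * (q * P t + r * (t * P' t)))"
    unfolding P_def P'_def
    by (intro sums_mult sums_add entire_coeffs_sums sums_real_mult_entire_coeffs c)
  moreover have "u powr (q + r * real k) = u powr q * t ^ k" for k
    using u by (simp add: t_def powr_add powr_powr mult.commute flip: powr_realpow)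
  ultimately show ?thesis
    by (simp add: algebra_simps)
qed

lemma sums_integral_power_series:
  fixes J \<phi> :: "real \<Rightarrow> real" and I :: "nat \<Rightarrow> real"
  assumes c: "entire_coeffs c"
    and J: "\<And>k. ((\<lambda>u. J u * \<phi> u ^ k) has_integral I k) S"
    and J_nonneg: "\<And>u. u \<in> S \<Longrightarrow> 0 \<le> J u"
    and \<phi>_bounded: "\<And>u. u \<in> S \<Longrightarrow> \<bar>\<phi> u\<bar> \<le> T"
  shows "(\<lambda>k. c k * I k) sums integral S (\<lambda>u. J u * (\<Sum>k. c k * \<phi> u ^ k))"
proof -
  define M where "M = (\<Sum>k. \<bar>c k\<bar> * \<bar>T\<bar> ^ k)"
  define F where "F n u = (\<Sum>k<n. c k * (J u * \<phi> u ^ k))" for n u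
  have F_int: "(F n has_integral (\<Sum>k<n. c k * I k)) S" for n
    unfolding F_def[abs_def] by (intro has_integral_sum has_integral_mult_right J) auto
  have "(\<lambda>n. integral S (F n)) \<longlonglongrightarrow> integral S (\<lambda>u. J u * (\<Sum>k. c k * \<phi> u ^ k))"
  proof (rule dominated_convergence(2))
    show "F n integrable_on S" for n
      using F_int by blast
    show "(\<lambda>u. M * J u) integrable_on S"
      using has_integral_mult_right[OF J[of 0], of M] by (auto simp: integrable_on_def)
    show "norm (F n u) \<le> M * J u" if u: "u \<in> S" for n u
    proof -
      have "norm (F n u) \<le> (\<Sum>k<n. \<bar>c k * (J u * \<phi> u ^ k)\<bar>)"
        unfolding F_def by (simp add: sum_abs)
      also have "\<dots> = (\<Sum>k<n. \<bar>c k\<bar> * \<bar>\<phi> u\<bar> ^ k) * J u"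
        using J_nonneg[OF u] by (simp add: sum_distrib_left sum_distrib_right abs_mult power_abs mult_ac)
      also have "\<dots> \<le> (\<Sum>k<n. \<bar>c k\<bar> * \<bar>T\<bar> ^ k) * J u"
        using \<phi>_bounded[OF u] J_nonneg[OF u]
        by (intro mult_right_mono sum_mono mult_left_mono power_mono) auto
      also have "\<dots> \<le> M * J u"
        unfolding M_def using J_nonneg[OF u] summable_abs_entire_coeffs[OF c]
        by (intro mult_right_mono sum_le_suminf) auto
      finally show ?thesis .
    qed
    show "(\<lambda>n. F n u) \<longlonglongrightarrow> J u * (\<Sum>k. c k * \<phi> u ^ k)" for u
      using sums_mult[OF entire_coeffs_sums[OF c], of "J u"]
      by (simp add: F_def sums_def mult_ac)
  qed
  then show ?thesis
    by (simp add: sums_def integral_unique[OF F_int])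
qed

section \<open>Erdelyi--Kober operators on power series\<close>

text \<open>The multiplier by which \<open>EK 2 0 \<beta>\<close> acts on \<open>x powr p\<close>.\<close>

definition EK2_symbol :: "real \<Rightarrow> real \<Rightarrow> real" where
  "EK2_symbol \<beta> p = Gamma (1 + p / 2) * rGamma (1 + \<beta> + p / 2)"

lemma EK2_symbol_step:
  "EK2_symbol \<beta> p = (\<beta> + 1 + p / 2) * EK2_symbol (\<beta> + 1) p"
  using rGamma_plus1[of "1 + \<beta> + p / 2"] by (simp add: EK2_symbol_def algebra_simps)

lemma EK_pos_powr_series:
  fixes \<beta> q r x :: real
  assumes \<beta>: "\<beta> > 0" and q: "q > -2" and r: "r \<ge> 0" and x: "x > 0" and c: "entire_coeffs c"
    and f: "\<And>u. u > 0 \<Longrightarrow> (\<lambda>k. c k * u powr (q + r * real k)) sums f u"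
  shows "(\<lambda>k. c k * EK2_symbol \<beta> (q + r * real k) * x powr (q + r * real k)) sums EK_pos 2 0 \<beta> f x"
proof -
  define J where "J u = (x powr 2 - u powr 2) powr (\<beta> - 1) * u powr q * (2 * u)" for u
  define I where "I k = x powr (2 * \<beta> + (q + r * real k)) * Beta ((q + r * real k) / 2 + 1) \<beta>" for k
  define P where "P y = (\<Sum>k. c k * y ^ k)" for y
  have "((\<lambda>u. J u * (u powr r) ^ k) has_integral I k) {0..x}" for k
  proof -
    have "q + r * real k > -2"
      using q mult_nonneg_nonneg[OF r of_nat_0_le_iff[of k]] by linarith
    from EK_kernel_has_integral[OF x \<beta> this] show ?thesis
      unfolding I_def by (rule has_integral_eq[rotated])
         (auto simp: J_def powr_add powr_powr mult.commute simp flip: powr_realpow)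
  qed
  then have termwise: "(\<lambda>k. c k * I k) sums integral {0..x} (\<lambda>u. J u * P (u powr r))"
    unfolding P_def using x r
    by (intro sums_integral_power_series[OF c, where T = "x powr r"]) (auto simp: J_def intro: powr_mono2)
  have EK_pos_eq: "EK_pos 2 0 \<beta> f x = integral {0..x} (\<lambda>u. J u * P (u powr r)) * (x powr (- 2 * \<beta>) / Gamma \<beta>)"
  proof -
    have "f u = u powr q * P (u powr r)" if "u > 0" for u
      using sums_unique2[OF f powr_series_sums[OF c]] that by (simp add: P_def)
    then have "integral {0..x} (\<lambda>u. (x powr 2 - u powr 2) powr (\<beta> - 1) * u powr (2 * 0) * f u * (2 * u powr (2 - 1)))
        = integral {0..x} (\<lambda>u. J u * P (u powr r))"
      by (intro integral_spike[of "{0}"]) (auto simp: J_def mult_ac)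
    then show ?thesis
      by (simp add: EK_pos_def mult.commute)
  qed
  have symbol_eq: "c k * I k * (x powr (- 2 * \<beta>) / Gamma \<beta>) =
      c k * EK2_symbol \<beta> (q + r * real k) * x powr (q + r * real k)" for k
  proof -
    have "x powr (2 * \<beta> + (q + r * real k)) * x powr (- 2 * \<beta>) = x powr (q + r * real k)"
      by (simp add: powr_add [symmetric])
    then show ?thesis
      using Gamma_real_pos[OF \<beta>] by (simp add: I_def EK2_symbol_def Beta_def rGamma_inverse_Gamma field_simps)
  qed
  show ?thesis
    using sums_mult2[OF termwise, of "x powr (- 2 * \<beta>) / Gamma \<beta>"] unfolding symbol_eq EK_pos_eq .
qed

lemma EK_iter_powr_series:
  fixes q r x :: real
  assumes q: "q > -2" and r: "r \<ge> 0" and x: "x > 0"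
  shows "\<beta> + real n > 0 \<Longrightarrow> entire_coeffs c \<Longrightarrow>
    (\<And>u. u > 0 \<Longrightarrow> (\<lambda>k. c k * u powr (q + r * real k)) sums f u) \<Longrightarrow>
    (\<lambda>k. c k * EK2_symbol \<beta> (q + r * real k) * x powr (q + r * real k)) sums EK_iter n 2 0 \<beta> f x"
proof (induction n arbitrary: \<beta> c f)
  case 0
  then show ?case
    using EK_pos_powr_series[OF _ q r x] by simp
next
  case (Suc n)
  have \<beta>: "(\<beta> + 1) + real n > 0"
    using Suc.prems(1) by simp
  have "(\<lambda>k. c k * EK2_symbol (\<beta> + 1) (q + r * real k) * x powr (q + r * real k))
      sums EK_iter n 2 0 (\<beta> + 1) f x"
    by (rule Suc.IH[OF \<beta> Suc.prems(2,3)])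
  moreover have "(\<lambda>k. c k * (q + r * real k) * EK2_symbol (\<beta> + 1) (q + r * real k) * x powr (q + r * real k))
      sums EK_iter n 2 0 (\<beta> + 1) (\<lambda>u. u * deriv f u) x"
    by (rule Suc.IH[OF \<beta> entire_coeffs_affine_weight[OF Suc.prems(2)] deriv_powr_series[OF Suc.prems(2)]])
       (use Suc.prems(3) in auto)
  ultimately have "(\<lambda>k. (0 + \<beta> + 1) * (c k * EK2_symbol (\<beta> + 1) (q + r * real k) * x powr (q + r * real k))
      + 1 / 2 * (c k * (q + r * real k) * EK2_symbol (\<beta> + 1) (q + r * real k) * x powr (q + r * real k)))
      sums EK_iter (Suc n) 2 0 \<beta> f x"
    unfolding EK_iter.simps by (intro sums_add sums_mult)
  moreover have "(0 + \<beta> + 1) * (c k * EK2_symbol (\<beta> + 1) (q + r * real k) * x powr (q + r * real k))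
      + 1 / 2 * (c k * (q + r * real k) * EK2_symbol (\<beta> + 1) (q + r * real k) * x powr (q + r * real k))
      = c k * EK2_symbol \<beta> (q + r * real k) * x powr (q + r * real k)" for k
    by (simp add: EK2_symbol_step[of \<beta>] algebra_simps)
  ultimately show ?case
    by simp
qed

lemma EK_powr_series:
  fixes \<beta> q r x :: real
  assumes "q > -2" "r \<ge> 0" "x > 0" "entire_coeffs c"
    and "\<And>u. u > 0 \<Longrightarrow> (\<lambda>k. c k * u powr (q + r * real k)) sums f u"
  shows "(\<lambda>k. c k * EK2_symbol \<beta> (q + r * real k) * x powr (q + r * real k)) sums EK 2 0 \<beta> f x"
proof -
  have "\<beta> + real (if \<beta> > 0 then 0 else nat \<lfloor>- \<beta>\<rfloor> + 1) > 0"
    by (cases "\<beta> > 0") (simp_all, linarith)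
  from EK_iter_powr_series[OF assms(1-3) this assms(4,5)] show ?thesis
    by (simp add: EK_def)
qed

lemma LB_frac_powr_series:
  fixes \<alpha> q r w :: real
  defines "\<sigma> k \<equiv> EK2_symbol (- \<alpha>) (q + r * real k)"
  assumes q: "q > -2" and r: "r \<ge> 0" and w: "w > 0"
    and c: "entire_coeffs c" and c\<sigma>: "entire_coeffs (\<lambda>k. c k * \<sigma> k)"
    and f: "\<And>u. u > 0 \<Longrightarrow> (\<lambda>k. c k * u powr (q + r * real k)) sums f u"
  shows "(\<lambda>k. 4 powr \<alpha> * w powr (- 2 * \<alpha>) * (c k * (\<sigma> k)\<^sup>2 * w powr (q + r * real k)))
    sums LB_frac \<alpha> f w"
proof -
  have "(\<lambda>k. c k * \<sigma> k * x powr (q + r * real k)) sums EK 2 0 (- \<alpha>) f x" if "x > 0" for x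
    unfolding \<sigma>_def by (rule EK_powr_series[OF q r that c f])
  from EK_powr_series[OF q r w c\<sigma> this, of "- \<alpha>"] show ?thesis
    unfolding LB_frac_def \<sigma>_def[symmetric] by (intro sums_mult) (simp add: power2_eq_square mult_ac)
qed

section \<open>Decay of the reciprocal Gamma function\<close>

lemma power_div_fact_le_exp:
  fixes T :: real
  assumes "T \<ge> 0"
  shows "T ^ n / fact n \<le> exp T"
proof -
  have exp_sums: "(\<lambda>n. T ^ n / fact n) sums exp T"
    using exp_converges[of T] by (simp add: divide_inverse mult.commute)
  have "(\<Sum>m\<in>{n}. T ^ m / fact m) \<le> (\<Sum>m. T ^ m / fact m)"
    using exp_sums assms by (intro sum_le_suminf) (auto simp: sums_iff)
  then show ?thesis
    using exp_sums by (simp add: sums_iff)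
qed

lemma fact_le_Gamma_real:
  fixes y :: real
  assumes y: "y \<ge> 2"
  shows "fact (nat \<lfloor>y\<rfloor> - 1) \<le> Gamma y"
proof -
  define m where "m = nat \<lfloor>y\<rfloor>"
  have m: "m \<ge> 2" "real m \<le> y"
    using y unfolding m_def by linarith+
  have "fact (m - 1) = Gamma (real m)"
    using Gamma_fact[of "m - 1", where 'a = real] m by (simp add: of_nat_diff)
  also have "\<dots> \<le> Gamma y"
    using Gamma_real_strict_mono[of "real m" y] m by (cases "real m = y") auto
  finally show ?thesis
    by (simp add: m_def)
qed

lemma rGamma_real_le_exp_div_powr:
  fixes y T :: real
  assumes y: "y \<ge> 2" and T: "T \<ge> 1"
  shows "rGamma y \<le> exp T / T powr (y - 2)"
proof -
  define m where "m = nat \<lfloor>y\<rfloor> - 1"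
  have "rGamma y \<le> 1 / fact m"
    using fact_le_Gamma_real[OF y] y unfolding m_def
    by (simp add: rGamma_inverse_Gamma inverse_eq_divide frac_le)
  also have "\<dots> \<le> exp T / T ^ m"
    using power_div_fact_le_exp[of T m] T by (simp add: field_simps)
  also have "\<dots> \<le> exp T / T powr (y - 2)"
  proof -
    have "T powr (y - 2) \<le> T powr real m"
      using y T unfolding m_def by (intro powr_mono) linarith+
    then show ?thesis
      using T by (intro divide_left_mono) (auto simp: powr_realpow)
  qed
  finally show ?thesis .
qed

lemma rGamma_real_bounds:
  fixes y :: real
  assumes "y \<ge> 2"
  shows "0 \<le> rGamma y" "rGamma y \<le> 1"
proof -
  have "Gamma 2 \<le> Gamma y"
    using Gamma_real_strict_mono[of 2 y] assms by (cases "y = 2") auto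
  then show "0 \<le> rGamma y" "rGamma y \<le> 1"
    by (auto simp: rGamma_inverse_Gamma Gamma_numeral inverse_le_1_iff)
qed

lemma summable_rGamma_geometric:
  fixes \<alpha> R :: real
  assumes \<alpha>: "\<alpha> > 0" and R: "R \<ge> 0"
  shows "summable (\<lambda>k. rGamma (\<alpha> * real k + \<alpha>) * R ^ k)"
proof (rule summable_comparison_test')
  define T where "T = (2 * R + 2) powr (1 / \<alpha>)"
  have T: "T \<ge> 1"
    unfolding T_def using \<alpha> R by (intro ge_one_powr_ge_zero) auto
  have T_\<alpha>: "T powr \<alpha> = 2 * R + 2"
    unfolding T_def using \<alpha> R by (simp add: powr_powr)
  show "summable (\<lambda>k. exp T * T\<^sup>2 * (R / (2 * R + 2)) ^ k)"
    using R by (intro summable_mult summable_geometric) auto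
  show "norm (rGamma (\<alpha> * real k + \<alpha>) * R ^ k) \<le> exp T * T\<^sup>2 * (R / (2 * R + 2)) ^ k"
    if k: "nat \<lceil>2 / \<alpha>\<rceil> \<le> k" for k
  proof -
    have "\<alpha> * real k \<ge> 2"
      using k \<alpha> by (simp add: field_simps)
    then have y: "\<alpha> * real k + \<alpha> \<ge> 2"
      using \<alpha> by linarith
    have "rGamma (\<alpha> * real k + \<alpha>) \<le> exp T / T powr (\<alpha> * real k + \<alpha> - 2)"
      by (rule rGamma_real_le_exp_div_powr[OF y T])
    also have "\<dots> \<le> exp T / T powr (\<alpha> * real k - 2)"
      using T \<alpha> by (intro divide_left_mono powr_mono) auto
    also have "\<dots> = exp T * T\<^sup>2 / (2 * R + 2) ^ k"
      using T R by (simp add: powr_diff T_\<alpha> powr_powr [symmetric] mult.commute powr_realpow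
          flip: powr_power)
    finally have "rGamma (\<alpha> * real k + \<alpha>) * R ^ k \<le> exp T * T\<^sup>2 / (2 * R + 2) ^ k * R ^ k"
      using R by (intro mult_right_mono) auto
    then show ?thesis
      using rGamma_real_bounds(1)[OF y] R by (simp add: abs_mult power_divide)
  qed
qed

lemma entire_coeffs_rGamma_bound:
  fixes \<alpha> B :: real and d :: "nat \<Rightarrow> real"
  assumes \<alpha>: "\<alpha> > 0" and B: "B \<ge> 0"
    and d: "\<And>k. \<alpha> * real k \<ge> 2 \<Longrightarrow> \<bar>d k\<bar> \<le> rGamma (\<alpha> * real k + \<alpha>) * B ^ k"
  shows "entire_coeffs d"
  unfolding entire_coeffs_def
proof
  fix y :: real
  have "summable (\<lambda>k. rGamma (\<alpha> * real k + \<alpha>) * (B * \<bar>y\<bar>) ^ k)"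
    using B by (intro summable_rGamma_geometric \<alpha>) auto
  then show "summable (\<lambda>k. d k * y ^ k)"
  proof (rule summable_comparison_test'[where N = "nat \<lceil>2 / \<alpha>\<rceil>"])
    fix k assume "nat \<lceil>2 / \<alpha>\<rceil> \<le> k"
    then have "\<alpha> * real k \<ge> 2"
      using \<alpha> by (simp add: field_simps)
    then show "norm (d k * y ^ k) \<le> rGamma (\<alpha> * real k + \<alpha>) * (B * \<bar>y\<bar>) ^ k"
      using mult_right_mono[OF d, of k "\<bar>y\<bar> ^ k"]
      by (simp add: abs_mult power_abs power_mult_distrib mult_ac)
  qed
qed

lemma entire_coeffs_rGamma_product:
  fixes \<alpha> \<gamma> A :: real
  assumes \<alpha>: "\<alpha> > 0" and \<gamma>: "\<gamma> \<ge> 0"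
  shows "entire_coeffs (\<lambda>k. (-1) ^ k * A ^ (2 * k) * rGamma (\<alpha> * real k + \<alpha>) * rGamma (\<alpha> * real k + \<gamma>))"
proof (rule entire_coeffs_rGamma_bound[OF \<alpha> zero_le_power2[of A]])
  fix k assume "\<alpha> * real k \<ge> 2"
  then have "0 \<le> rGamma (\<alpha> * real k + \<alpha>)" "0 \<le> rGamma (\<alpha> * real k + \<gamma>)"
      "rGamma (\<alpha> * real k + \<gamma>) \<le> 1"
    using \<alpha> \<gamma> by (intro rGamma_real_bounds; linarith)+
  then have "\<bar>(-1) ^ k * A ^ (2 * k) * rGamma (\<alpha> * real k + \<alpha>) * rGamma (\<alpha> * real k + \<gamma>)\<bar>
      = rGamma (\<alpha> * real k + \<alpha>) * rGamma (\<alpha> * real k + \<gamma>) * (A\<^sup>2) ^ k"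
    by (simp add: abs_mult power_abs power_mult)
  also have "\<dots> \<le> rGamma (\<alpha> * real k + \<alpha>) * (A\<^sup>2) ^ k"
    using \<open>0 \<le> rGamma (\<alpha> * real k + \<alpha>)\<close> \<open>rGamma (\<alpha> * real k + \<gamma>) \<le> 1\<close>
    by (intro mult_right_mono mult_left_le) auto
  finally show "\<bar>(-1) ^ k * A ^ (2 * k) * rGamma (\<alpha> * real k + \<alpha>) * rGamma (\<alpha> * real k + \<gamma>)\<bar>
      \<le> rGamma (\<alpha> * real k + \<alpha>) * (A\<^sup>2) ^ k" .
qed

text \<open>\<open>u\<^sub>\<alpha>(w) = w powr (2\<alpha> - 2) * (\<Sum>k. frac_bessel_coeff \<alpha> A k * (w powr (2\<alpha>))\<^sup>k)\<close> with
  \<open>A = \<lambda> / (2c)\<^sup>\<alpha>\<close>.\<close>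

definition frac_bessel_coeff :: "real \<Rightarrow> real \<Rightarrow> nat \<Rightarrow> real" where
  "frac_bessel_coeff \<alpha> A k = (-1) ^ k * A ^ (2 * k) * (rGamma (\<alpha> * real k + \<alpha>))\<^sup>2"

lemma EK2_symbol_frac_bessel:
  "EK2_symbol (- \<alpha>) (2 * \<alpha> - 2 + 2 * \<alpha> * real k) = Gamma (\<alpha> * real k + \<alpha>) * rGamma (\<alpha> * real k)"
proof -
  have "1 + (2 * \<alpha> - 2 + 2 * \<alpha> * real k) / 2 = \<alpha> * real k + \<alpha>"
    and "1 + - \<alpha> + (2 * \<alpha> - 2 + 2 * \<alpha> * real k) / 2 = \<alpha> * real k"
    by (simp_all add: field_simps)
  then show ?thesis
    by (simp only: EK2_symbol_def)
qed

lemma frac_bessel_coeff_times_symbol: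
  assumes "\<alpha> > 0"
  shows "frac_bessel_coeff \<alpha> A k * EK2_symbol (- \<alpha>) (2 * \<alpha> - 2 + 2 * \<alpha> * real k)
    = (-1) ^ k * A ^ (2 * k) * rGamma (\<alpha> * real k + \<alpha>) * rGamma (\<alpha> * real k)"
proof -
  have "Gamma (\<alpha> * real k + \<alpha>) \<noteq> 0"
    using assms by (intro less_imp_neq[symmetric] Gamma_real_pos add_nonneg_pos) auto
  then show ?thesis
    by (simp add: frac_bessel_coeff_def EK2_symbol_frac_bessel rGamma_inverse_Gamma power2_eq_square)
qed

lemma frac_bessel_coeff_times_symbol_sq:
  assumes "\<alpha> > 0"
  shows "frac_bessel_coeff \<alpha> A k * (EK2_symbol (- \<alpha>) (2 * \<alpha> - 2 + 2 * \<alpha> * real k))\<^sup>2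
    = (-1) ^ k * A ^ (2 * k) * (rGamma (\<alpha> * real k))\<^sup>2"
proof -
  have "Gamma (\<alpha> * real k + \<alpha>) \<noteq> 0"
    using assms by (intro less_imp_neq[symmetric] Gamma_real_pos add_nonneg_pos) auto
  then show ?thesis
    unfolding EK2_symbol_frac_bessel
    by (simp add: frac_bessel_coeff_def rGamma_inverse_Gamma power2_eq_square field_simps)
qed

lemma frac_bessel_coeff_symbol_shift:
  assumes "\<alpha> > 0"
  shows "frac_bessel_coeff \<alpha> A 0 * (EK2_symbol (- \<alpha>) (2 * \<alpha> - 2))\<^sup>2 = 0"
    and "frac_bessel_coeff \<alpha> A (Suc k) * (EK2_symbol (- \<alpha>) (2 * \<alpha> - 2 + 2 * \<alpha> * real (Suc k)))\<^sup>2
      = - A\<^sup>2 * frac_bessel_coeff \<alpha> A k"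
  using frac_bessel_coeff_times_symbol_sq[OF assms, of A 0]
    frac_bessel_coeff_times_symbol_sq[OF assms, of A "Suc k"]
  by (simp_all add: frac_bessel_coeff_def algebra_simps power2_eq_square)

lemma entire_coeffs_frac_bessel_coeff:
  "\<alpha> > 0 \<Longrightarrow> entire_coeffs (frac_bessel_coeff \<alpha> A)"
  using entire_coeffs_rGamma_product[of \<alpha> \<alpha> A]
  by (simp add: frac_bessel_coeff_def[abs_def] power2_eq_square mult.assoc)

lemma entire_coeffs_frac_bessel_coeff_symbol:
  "\<alpha> > 0 \<Longrightarrow>
    entire_coeffs (\<lambda>k. frac_bessel_coeff \<alpha> A k * EK2_symbol (- \<alpha>) (2 * \<alpha> - 2 + 2 * \<alpha> * real k))"
  using entire_coeffs_rGamma_product[of \<alpha> 0 A] by (simp add: frac_bessel_coeff_times_symbol)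

lemma LB_frac_frac_bessel_eigen:
  fixes \<alpha> A w :: real
  assumes \<alpha>: "\<alpha> > 0" and w: "w > 0"
    and u: "\<And>x. x > 0 \<Longrightarrow> u x = x powr (2 * \<alpha> - 2) * (\<Sum>k. frac_bessel_coeff \<alpha> A k * (x powr (2 * \<alpha>)) ^ k)"
  shows "LB_frac \<alpha> u w = - (4 powr \<alpha> * A\<^sup>2) * u w"
proof -
  define q where "q = 2 * \<alpha> - 2"
  define t where "t k = 4 powr \<alpha> * w powr (- 2 * \<alpha>) * (frac_bessel_coeff \<alpha> A k
      * (EK2_symbol (- \<alpha>) (q + 2 * \<alpha> * real k))\<^sup>2 * w powr (q + 2 * \<alpha> * real k))" for k
  have u_series: "(\<lambda>k. frac_bessel_coeff \<alpha> A k * x powr (q + 2 * \<alpha> * real k)) sums u x" if "x > 0" for x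
    unfolding u[OF that] q_def by (rule powr_series_sums[OF entire_coeffs_frac_bessel_coeff[OF \<alpha>] that])
  have "t sums LB_frac \<alpha> u w"
    unfolding t_def using \<alpha> u_series
    by (intro LB_frac_powr_series[OF _ _ w entire_coeffs_frac_bessel_coeff[OF \<alpha>]])
       (auto simp: q_def entire_coeffs_frac_bessel_coeff_symbol)
  moreover have "t 0 = 0"
    using frac_bessel_coeff_symbol_shift(1)[OF \<alpha>, of A] by (simp add: t_def q_def)
  ultimately have "(\<lambda>k. t (Suc k)) sums LB_frac \<alpha> u w"
    by (simp add: sums_Suc_iff)
  moreover have "t (Suc k) = - (4 powr \<alpha> * A\<^sup>2) * (frac_bessel_coeff \<alpha> A k * w powr (q + 2 * \<alpha> * real k))" for k
  proof -
    have "w powr (- 2 * \<alpha>) * w powr (q + 2 * \<alpha> * real (Suc k)) = w powr (q + 2 * \<alpha> * real k)"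
      by (simp add: powr_add [symmetric] algebra_simps)
    moreover have "frac_bessel_coeff \<alpha> A (Suc k) * (EK2_symbol (- \<alpha>) (q + 2 * \<alpha> * real (Suc k)))\<^sup>2
        = - A\<^sup>2 * frac_bessel_coeff \<alpha> A k"
      unfolding q_def by (rule frac_bessel_coeff_symbol_shift(2)[OF \<alpha>])
    ultimately show ?thesis
      unfolding t_def by (simp add: algebra_simps)
  qed
  ultimately have "(\<lambda>k. - (4 powr \<alpha> * A\<^sup>2) * (frac_bessel_coeff \<alpha> A k * w powr (q + 2 * \<alpha> * real k)))
      sums LB_frac \<alpha> u w"
    by (simp only:)
  then show ?thesis
    by (rule sums_unique2[OF _ sums_mult[OF u_series[OF w]]])
qed

theorem theorem3p1:
  fixes \<alpha> lam c :: real and u :: "real \<Rightarrow> real"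
  assumes "0 < \<alpha>" and "\<alpha> \<le> 1" and "0 < c"
    and "\<And>w. 0 < w \<Longrightarrow> u w = w powr (2 * \<alpha> - 2) *
          (\<Sum>k. (-1) ^ k * (lam / (2 powr \<alpha> * c powr \<alpha>)) ^ (2 * k)
                * w powr (2 * \<alpha> * real k) / (Gamma (\<alpha> * real k + \<alpha>))\<^sup>2)"
  shows "\<forall>w>0. LB_frac \<alpha> u w = - (lam\<^sup>2 / c powr (2 * \<alpha>)) * u w"
proof (intro allI impI)
  fix w :: real assume w: "w > 0"
  define A where "A = lam / (2 powr \<alpha> * c powr \<alpha>)"
  have "u x = x powr (2 * \<alpha> - 2) * (\<Sum>k. frac_bessel_coeff \<alpha> A k * (x powr (2 * \<alpha>)) ^ k)"
    if "x > 0" for x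
    using assms(4)[OF that] that
    by (simp add: A_def frac_bessel_coeff_def rGamma_inverse_Gamma powr_powr divide_inverse
        power_inverse mult_ac flip: powr_realpow)
  then have "LB_frac \<alpha> u w = - (4 powr \<alpha> * A\<^sup>2) * u w"
    by (rule LB_frac_frac_bessel_eigen[OF assms(1) w])
  moreover have "4 powr \<alpha> * A\<^sup>2 = lam\<^sup>2 / c powr (2 * \<alpha>)"
    using assms(3) powr_powr[of 2 2 \<alpha>]
    by (simp add: A_def power_divide power_mult_distrib powr_powr mult.commute flip: powr_power powr_numeral)
  ultimately show "LB_frac \<alpha> u w = - (lam\<^sup>2 / c powr (2 * \<alpha>)) * u w"
    by simp
qed

end
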